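(* Let $\mathcal T$ be a finite trajectory set, $\mathcal Z$ a finite context set, $u:\mathcal T\times\mathcal Z\to\mathbb R$, $z_k\in\mathcal Z$, $\epsilon\in[0,1]$, and $P'(z)=(1-\epsilon)\mathbb I\{z=z_k\}+\epsilon R(z)$ for some distribution $R$ on $\mathcal Z$. Let $BC(\tau)=BC_{\delta_{z_k}}(\tau)=\frac1{|\mathcal T|}\sum_{\tau'\in\mathcal T}O_u(\tau,\tau',z_k)$ and $BC'(\tau)=BC_{P'}(\tau)$. For $\alpha'>0$ define distributions on $\mathcal T$ by $p_{z_k}(\tau)=\exp(BC(\tau)/\alpha')/Z$ and $q_{z_k}(\tau)=\exp(BC'(\tau)/\alpha')/Z'$ with $Z=\sum_\tau\exp(BC(\tau)/\alpha')$, $Z'=\sum_\tau\exp(BC'(\tau)/\alpha')$. Then $$\mathrm{KL}(p_{z_k}\,\|\,q_{z_k})\le\frac{\epsilon^2}{2\alpha'^2}.$$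
   Context: $O_u(a,b,z)=\tfrac12$ if $u(a,z)=u(b,z)$, $1$ if $u(a,z)>u(b,z)$, $0$ otherwise. For a distribution $P$ on $\mathcal Z$, $BC_P(a)=\frac{1}{|\mathcal T|}\sum_{b\in\mathcal T}\mathbb E_{z\sim P}[O_u(a,b,z)]$; $\delta_{z_k}$ is the point mass at $z_k$. Interpretation: $p_{z_k}$ approximates the maximum-entropy optimal trajectory distribution (temperature $\alpha'$) for $u(\cdot,z_k)$ and $q_{z_k}$ that for the learned utility trained on data whose contexts follow $P'$, with $\epsilon$ the misassignment probability of the encoder. *)

theory Defs
  imports "HOL-Analysis.Analysis"
begin

definition O_u :: "('t \<Rightarrow> 'z \<Rightarrow> real) \<Rightarrow> 't \<Rightarrow> 't \<Rightarrow> 'z \<Rightarrow> real" where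
  "O_u u a b z = (if u a z = u b z then 1/2 else if u a z > u b z then 1 else 0)"

definition BC :: "'t set \<Rightarrow> 'z set \<Rightarrow> ('t \<Rightarrow> 'z \<Rightarrow> real) \<Rightarrow> ('z \<Rightarrow> real) \<Rightarrow> 't \<Rightarrow> real" where
  "BC T Zs u P a = (1 / real (card T)) * (\<Sum>b\<in>T. (\<Sum>z\<in>Zs. P z * O_u u a b z))"

definition is_dist :: "'z set \<Rightarrow> ('z \<Rightarrow> real) \<Rightarrow> bool" where
  "is_dist Zs R \<longleftrightarrow> (\<forall>z\<in>Zs. 0 \<le> R z) \<and> (\<Sum>z\<in>Zs. R z) = 1"

definition point_mass :: "'z \<Rightarrow> 'z \<Rightarrow> real" where
  "point_mass zk z = (if z = zk then 1 else 0)"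

definition gibbs :: "'t set \<Rightarrow> real \<Rightarrow> ('t \<Rightarrow> real) \<Rightarrow> 't \<Rightarrow> real" where
  "gibbs T \<alpha> f t = exp (f t / \<alpha>) / (\<Sum>s\<in>T. exp (f s / \<alpha>))"

definition KL :: "'t set \<Rightarrow> ('t \<Rightarrow> real) \<Rightarrow> ('t \<Rightarrow> real) \<Rightarrow> real" where
  "KL T p q = (\<Sum>t\<in>T. p t * ln (p t / q t))"

end

theory Submission
  imports Defs "HOL-Probability.Hoeffding"
begin

text \<open>The KL divergence between the Gibbs distributions \<open>p\<close> and \<open>q\<close> of two score functions
  \<open>f\<close> and \<open>g\<close> is the cumulant \<open>ln E\<^sub>p[exp X] - E\<^sub>p[X]\<close> of \<open>X = (g - f) / \<alpha>'\<close>.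
  The Borda count is linear in the context distribution, so \<open>BC - BC' = \<epsilon> (BC\<^sub>\<delta> - BC\<^sub>R)\<close>
  with both Borda counts in \<open>[0, 1]\<close>; hence \<open>X\<close> ranges over an interval of length
  \<open>2 \<epsilon> / \<alpha>'\<close> and Hoeffding's lemma bounds the cumulant by \<open>(2 \<epsilon> / \<alpha>')\<^sup>2 / 8\<close>.\<close>

lemma Hoeffdings_lemma_finite_sum:
  fixes w x :: "'a \<Rightarrow> real"
  assumes "finite A" and w_nonneg: "\<And>t. t \<in> A \<Longrightarrow> 0 \<le> w t" and w_sum: "(\<Sum>t\<in>A. w t) = 1"
    and x_bounds: "\<And>t. t \<in> A \<Longrightarrow> x t \<in> {a..b}"
  shows "ln (\<Sum>t\<in>A. w t * exp (x t)) - (\<Sum>t\<in>A. w t * x t) \<le> (b - a)\<^sup>2 / 8"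
proof -
  define w' where "w' t = (if t \<in> A then w t else 0)" for t
  define p where "p = embed_pmf w'"
  have "(\<integral>\<^sup>+t. ennreal (w' t) \<partial>count_space UNIV)
      = (\<integral>\<^sup>+t. ennreal (w t) * indicator A t \<partial>count_space UNIV)"
    by (intro nn_integral_cong) (simp add: w'_def)
  also have "\<dots> = (\<Sum>t\<in>A. ennreal (w t))"
    using \<open>finite A\<close> by (simp add: nn_integral_count_space_finite flip: nn_integral_count_space_indicator)
  also have "\<dots> = 1"
    using w_nonneg by (simp add: w_sum)
  finally have pmf_p: "pmf p t = w' t" for t
    unfolding p_def using w_nonneg by (intro pmf_embed_pmf) (auto simp: w'_def)
  have support: "set_pmf p \<subseteq> A"
    by (auto simp: set_pmf_iff pmf_p w'_def split: if_splits)
  have integral_p: "measure_pmf.expectation p f = (\<Sum>t\<in>A. w t * f t)" for f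
    using \<open>finite A\<close> support
    by (subst integral_measure_pmf_real[of A]) (auto simp: pmf_p w'_def mult.commute)
  interpret interval_bounded_random_variable "measure_pmf p" x a b
    by unfold_locales (use support x_bounds in \<open>auto simp: AE_measure_pmf_iff\<close>)
  define E where "E = (\<Sum>t\<in>A. w t * x t)"
  have "(\<integral>\<^sup>+t. exp (1 * (x t - E)) \<partial>measure_pmf p) \<le> ennreal (exp (1\<^sup>2 * (b - a)\<^sup>2 / 8))"
    unfolding E_def integral_p[symmetric] by (rule Hoeffdings_lemma_nn_integral) simp
  also have "(\<integral>\<^sup>+t. exp (1 * (x t - E)) \<partial>measure_pmf p) = ennreal (\<Sum>t\<in>A. w t * exp (x t - E))"
    using \<open>finite A\<close> support
    by (subst nn_integral_eq_integral) (auto intro: integrable_measure_pmf_finite finite_subset simp: integral_p)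
  finally have "(\<Sum>t\<in>A. w t * exp (x t)) * exp (- E) \<le> exp ((b - a)\<^sup>2 / 8)"
    by (simp add: exp_diff sum_distrib_right sum_divide_distrib exp_minus field_simps)
  moreover obtain t where "t \<in> A" "w t \<noteq> 0"
    using w_sum by (metis sum.neutral zero_neq_one)
  then have "0 < (\<Sum>t\<in>A. w t * exp (x t))"
    using \<open>finite A\<close> w_nonneg by (intro sum_pos2[of A t]) (auto simp: order_less_le)
  ultimately have "ln ((\<Sum>t\<in>A. w t * exp (x t)) * exp (- E)) \<le> ln (exp ((b - a)\<^sup>2 / 8))"
    by (intro ln_mono) auto
  with \<open>0 < (\<Sum>t\<in>A. w t * exp (x t))\<close> show ?thesis
    by (simp add: E_def ln_mult)
qed

lemma gibbs_partition_pos: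
  fixes f :: "'t \<Rightarrow> real"
  assumes "finite T" "T \<noteq> {}"
  shows "0 < (\<Sum>s\<in>T. exp (f s / \<alpha>))"
  using assms by (intro sum_pos) auto

lemma gibbs_pos:
  assumes "finite T" "T \<noteq> {}"
  shows "0 < gibbs T \<alpha> f t"
  using gibbs_partition_pos[OF assms, of f \<alpha>] by (simp add: gibbs_def)

lemma sum_gibbs:
  assumes "finite T" "T \<noteq> {}"
  shows "(\<Sum>t\<in>T. gibbs T \<alpha> f t) = 1"
  using gibbs_partition_pos[OF assms, of f \<alpha>] by (simp add: gibbs_def flip: sum_divide_distrib)

lemma KL_gibbs_eq:
  fixes f g x :: "'t \<Rightarrow> real" and \<alpha> :: real
  assumes "finite T" "T \<noteq> {}"
  defines "x \<equiv> \<lambda>t. (g t - f t) / \<alpha>"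
  shows "KL T (gibbs T \<alpha> f) (gibbs T \<alpha> g)
    = ln (\<Sum>t\<in>T. gibbs T \<alpha> f t * exp (x t)) - (\<Sum>t\<in>T. gibbs T \<alpha> f t * x t)"
proof -
  define Zf where "Zf = (\<Sum>s\<in>T. exp (f s / \<alpha>))"
  define Zg where "Zg = (\<Sum>s\<in>T. exp (g s / \<alpha>))"
  have "Zf > 0" "Zg > 0"
    unfolding Zf_def Zg_def using gibbs_partition_pos[OF assms(1,2)] by blast+
  have shift: "gibbs T \<alpha> f t * exp (x t) = Zg / Zf * gibbs T \<alpha> g t" for t
    using \<open>Zg > 0\<close> by (simp add: gibbs_def Zf_def Zg_def x_def diff_divide_distrib exp_diff)
  have "(\<Sum>t\<in>T. gibbs T \<alpha> f t * exp (x t)) = Zg / Zf"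
    by (simp only: shift flip: sum_distrib_left) (simp add: sum_gibbs[OF assms(1,2)])
  moreover have "ln (gibbs T \<alpha> f t / gibbs T \<alpha> g t) = ln (Zg / Zf) - x t" for t
  proof -
    have "gibbs T \<alpha> f t / gibbs T \<alpha> g t = Zg / Zf * exp (- x t)"
      using shift[of t] gibbs_pos[OF assms(1,2), of \<alpha> g t] \<open>Zf > 0\<close>
      by (simp add: exp_minus field_simps)
    then show ?thesis
      using \<open>Zf > 0\<close> \<open>Zg > 0\<close> by (simp add: ln_mult ln_div)
  qed
  ultimately show ?thesis
    using sum_gibbs[OF assms(1,2)]
    by (simp add: KL_def right_diff_distrib sum_subtractf flip: sum_distrib_right)
qed

lemma KL_gibbs_le:
  fixes f g :: "'t \<Rightarrow> real"
  assumes "finite T" "T \<noteq> {}" "\<alpha> > 0" and close: "\<And>t. t \<in> T \<Longrightarrow> \<bar>f t - g t\<bar> \<le> c"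
  shows "KL T (gibbs T \<alpha> f) (gibbs T \<alpha> g) \<le> c\<^sup>2 / (2 * \<alpha>\<^sup>2)"
proof -
  have "(g t - f t) / \<alpha> \<in> {- c / \<alpha> .. c / \<alpha>}" if "t \<in> T" for t
    using close[OF that] \<open>\<alpha> > 0\<close> by (auto simp: divide_simps abs_le_iff)
  then have "KL T (gibbs T \<alpha> f) (gibbs T \<alpha> g) \<le> (c / \<alpha> - - c / \<alpha>)\<^sup>2 / 8"
    unfolding KL_gibbs_eq[OF assms(1,2)]
    by (intro Hoeffdings_lemma_finite_sum) (auto simp: assms(1,2) sum_gibbs less_imp_le gibbs_pos)
  also have "\<dots> = c\<^sup>2 / (2 * \<alpha>\<^sup>2)"
    by (simp add: power2_eq_square field_simps)
  finally show ?thesis .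
qed

lemma BC_bounds:
  assumes "is_dist Zs P"
  shows "BC T Zs u P a \<in> {0..1}"
proof -
  have inner: "(\<Sum>z\<in>Zs. P z * O_u u a b z) \<in> {0..1}" for b
  proof -
    have "(\<Sum>z\<in>Zs. P z * O_u u a b z) \<le> (\<Sum>z\<in>Zs. P z)"
      using assms by (intro sum_mono mult_left_le) (auto simp: is_dist_def O_u_def)
    moreover have "0 \<le> (\<Sum>z\<in>Zs. P z * O_u u a b z)"
      using assms by (intro sum_nonneg) (auto simp: is_dist_def O_u_def)
    ultimately show ?thesis
      using assms by (simp add: is_dist_def)
  qed
  have "(\<Sum>b\<in>T. \<Sum>z\<in>Zs. P z * O_u u a b z) \<le> real (card T) * 1"
    using inner by (intro sum_bounded_above) auto
  moreover have "0 \<le> (\<Sum>b\<in>T. \<Sum>z\<in>Zs. P z * O_u u a b z)"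
    by (rule sum_nonneg) (use inner in auto)
  ultimately show ?thesis
    by (cases "card T = 0") (auto simp: BC_def field_simps)
qed

lemma BC_linear_combination:
  "BC T Zs u (\<lambda>z. r * P z + s * Q z) a = r * BC T Zs u P a + s * BC T Zs u Q a"
proof -
  have "(\<Sum>b\<in>T. \<Sum>z\<in>Zs. (r * P z + s * Q z) * O_u u a b z)
      = r * (\<Sum>b\<in>T. \<Sum>z\<in>Zs. P z * O_u u a b z) + s * (\<Sum>b\<in>T. \<Sum>z\<in>Zs. Q z * O_u u a b z)"
    by (simp add: distrib_right sum.distrib sum_distrib_left mult.assoc)
  then show ?thesis
    by (simp add: BC_def algebra_simps)
qed

lemma abs_BC_diff_mixture_le:
  assumes "is_dist Zs P" "is_dist Zs Q" "0 \<le> e"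
  shows "\<bar>BC T Zs u P a - BC T Zs u (\<lambda>z. (1 - e) * P z + e * Q z) a\<bar> \<le> e"
proof -
  have "BC T Zs u P a - BC T Zs u (\<lambda>z. (1 - e) * P z + e * Q z) a
      = e * (BC T Zs u P a - BC T Zs u Q a)"
    unfolding BC_linear_combination by (simp add: algebra_simps)
  moreover have "\<bar>BC T Zs u P a - BC T Zs u Q a\<bar> \<le> 1"
    using BC_bounds[OF assms(1), of T u a] BC_bounds[OF assms(2), of T u a] by auto
  ultimately show ?thesis
    using \<open>0 \<le> e\<close> by (simp add: abs_mult mult_left_le)
qed

lemma is_dist_point_mass:
  assumes "finite Zs" "zk \<in> Zs"
  shows "is_dist Zs (point_mass zk)"
  using assms by (simp add: is_dist_def point_mass_def)

theorem mainTheorem7: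
  fixes T :: "'t set" and Zs :: "'z set" and u :: "'t \<Rightarrow> 'z \<Rightarrow> real"
    and zk :: 'z and \<epsilon> \<alpha>' :: real and R :: "'z \<Rightarrow> real"
  assumes "finite T" "T \<noteq> {}" "finite Zs" "zk \<in> Zs"
    and "0 \<le> \<epsilon>" "\<epsilon> \<le> 1"
    and "is_dist Zs R"
    and "\<alpha>' > 0"
  shows "KL T (gibbs T \<alpha>' (BC T Zs u (point_mass zk)))
              (gibbs T \<alpha>' (BC T Zs u (\<lambda>z. (1 - \<epsilon>) * point_mass zk z + \<epsilon> * R z)))
         \<le> \<epsilon>^2 / (2 * \<alpha>'^2)"
  using assms
  by (intro KL_gibbs_le abs_BC_diff_mixture_le is_dist_point_mass) auto

end
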